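(* Let $q$ be even and let $G=Sp(2n,q)=C_n(q)$ with $n>1$, or $G=\mathrm{Spin}^+(2n,q)=D_n(q)$ with $n>3$. Let $T_0$ be a split maximal torus of $G$ and $W=N_G(T_0)/T_0$ the Weyl group, acting on $\mathrm{Irr}\,T_0$ by conjugation. Then for every non-trivial $\beta\in\mathrm{Irr}\,T_0$ one has $|W\beta|\ge 2n$.
   Context: $T_0$ is a maximal torus contained in a Borel subgroup of the finite (non-twisted) Chevalley group $G$; it is a direct product of cyclic groups of order $q-1$. $W\beta$ denotes the orbit of $\beta$ under $W$. *)

theory Defs
  imports Complex_Main "HOL-Library.FuncSet" "Jordan_Normal_Form.Matrix"
begin

definition sp_form :: "nat \<Rightarrow> 'a :: field mat" where
  "sp_form n = mat (2*n) (2*n) (\<lambda>(i,j).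
      if i < n \<and> j = i + n then 1 else if n \<le> i \<and> i = j + n then - 1 else 0)"

definition Sp :: "nat \<Rightarrow> 'a :: field mat set" where
  "Sp n = {A \<in> carrier_mat (2*n) (2*n). transpose_mat A * sp_form n * A = sp_form n}"

definition quad_plus :: "nat \<Rightarrow> 'a :: field vec \<Rightarrow> 'a" where
  "quad_plus n x = (\<Sum>i<n. x $ i * x $ (n + i))"

definition O_plus :: "nat \<Rightarrow> 'a :: field mat set" where
  "O_plus n = {A \<in> carrier_mat (2*n) (2*n). invertible_mat A \<and>
     (\<forall>x \<in> carrier_vec (2*n). quad_plus n (A *\<^sub>v x) = quad_plus n x)}"

text \<open>Omega^+(2n,F): kernel of the Dickson invariant, which in characteristic 2 is
  rank(A - 1) mod 2, i.e. the parity of the dimension of the fixed space of A.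
  For a finite field F the fixed space has dimension k iff it has CARD(F)^k elements.
  For q even, Spin^+(2n,q) is isomorphic to Omega^+(2n,q).\<close>
definition Omega_plus :: "nat \<Rightarrow> 'a :: {field, finite} mat set" where
  "Omega_plus n = {A \<in> O_plus n. \<exists>k. even k \<and>
     card {x \<in> carrier_vec (2*n). A *\<^sub>v x = x} = card (UNIV :: 'a set) ^ k}"

definition split_torus :: "nat \<Rightarrow> 'a :: field mat set" where
  "split_torus n = {mat (2*n) (2*n) (\<lambda>(i,j). if i = j then
        (if i < n then t i else inverse (t (i - n))) else 0) | t. \<forall>i<n. t i \<noteq> 0}"

definition normalizer_mat :: "'a :: field mat set \<Rightarrow> 'a mat set \<Rightarrow> 'a mat set" where
  "normalizer_mat G T = {g \<in> G. \<exists>h \<in> G. g * h = 1\<^sub>m (dim_row g) \<and> h * g = 1\<^sub>m (dim_row g)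
       \<and> (\<lambda>t. g * t * h) ` T = T}"

text \<open>Linear (= irreducible, T abelian) complex characters of T.\<close>
definition linear_char :: "'a :: field mat set \<Rightarrow> ('a mat \<Rightarrow> complex) \<Rightarrow> bool" where
  "linear_char T \<beta> \<longleftrightarrow> (\<forall>s \<in> T. \<forall>t \<in> T. \<beta> (s * t) = \<beta> s * \<beta> t) \<and> (\<forall>t \<in> T. \<beta> t \<noteq> 0)"

text \<open>Orbit of beta under W = N_G(T)/T acting by conjugation; characters are
  considered as functions on T (restricted to T).\<close>
definition weyl_orbit :: "'a :: field mat set \<Rightarrow> 'a mat set \<Rightarrow> ('a mat \<Rightarrow> complex)
    \<Rightarrow> ('a mat \<Rightarrow> complex) set" where
  "weyl_orbit G T \<beta> = {restrict (\<lambda>t. \<beta> (h * t * g)) T | g h.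
      g \<in> normalizer_mat G T \<and> h \<in> G \<and> g * h = 1\<^sub>m (dim_row g) \<and> h * g = 1\<^sub>m (dim_row g)}"

end

theory Submission
  imports Defs "HOL-Library.Numeral_Type" "HOL-Library.Disjoint_Sets"
begin

text \<open>A character \<open>\<beta>\<close> of the split torus \<open>T \<cong> (F\<^sup>\<times>)\<^sup>n\<close> is a tuple of characters
  \<open>\<chi>\<^sub>1, ..., \<chi>\<^sub>n\<close> of \<open>F\<^sup>\<times>\<close>, and the Weyl group contains the signed permutation matrices
  of involutions (for \<open>\<Omega>\<^sup>+\<close>, those whose fixed space has even dimension), acting by permuting
  the \<open>\<chi>\<^sub>i\<close> and inverting some of them. As \<open>q\<close> is even, squaring is bijective on
  \<open>F\<^sup>\<times>\<close>, so every nontrivial \<open>\<chi>\<^sub>i\<close> differs from its inverse. Fix \<open>j\<close> in the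
  (nonempty) support \<open>K\<close> of \<open>\<beta>\<close>. Sign changes on \<open>2 |K|\<close> sets with distinct traces on
  \<open>K\<close> give distinct conjugates of \<open>\<beta>\<close>, and moving \<open>\<chi>\<^sub>j\<close> or \<open>\<chi>\<^sub>j\<inverse>\<close> to a
  coordinate outside \<open>K\<close> gives \<open>2 (n - |K|)\<close> further ones. If \<open>K\<close> is everything and only
  even sign changes are allowed, \<open>2 n\<close> sets of even size suffice since \<open>n > 3\<close>.\<close>

lemma char_two_if_card_even:
  assumes "even (card (UNIV :: 'a :: {field, finite} set))"
  shows "(1::'a) + 1 = 0"
proof (rule ccontr)
  assume two: "(1::'a) + 1 \<noteq> 0"
  \<comment> \<open>Then negation is a fixed-point-free involution of the nonzero elements, so their
    number vanishes in the two-element ring \<open>2\<close>.\<close>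
  have "(\<Sum>x\<in>UNIV - {0::'a}. 1 :: 2) = 0"
  proof (rule sum_involution_eq_0[where h = uminus])
    fix x :: 'a assume "x \<in> UNIV - {0}"
    show "- x \<noteq> x"
    proof
      assume "- x = x"
      then have "x + x = 0" using add.right_inverse[of x] by simp
      then have "(1 + 1) * x = 0" by (simp add: distrib_right)
      then show False using two \<open>x \<in> UNIV - {0}\<close> by simp
    qed
  qed auto
  then have "of_nat (card (UNIV - {0::'a})) = (0::2)"
    by (simp only: sum_constant mult_1_right)
  then have "even (card (UNIV - {0::'a}))"
    by (subst (asm) of_nat_eq_0_iff_char_dvd) simp
  then show False
    using assms by (simp add: card_Diff_singleton)
qed

lemma square_surj_char_two:
  assumes char_two: "(1::'a::{field, finite}) + 1 = 0" and "(y::'a) \<noteq> 0"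
  shows "\<exists>x. x \<noteq> 0 \<and> x * x = y"
proof -
  have double: "z + z = 0" for z :: 'a
  proof -
    have "z + z = (1 + 1) * z" by (simp add: distrib_right)
    then show ?thesis using char_two by simp
  qed
  have "x = y" if "x * x = y * (y::'a)" for x y
  proof -
    have "(x + y) * (x + y) = (x * x + y * y) + (x * y + x * y)"
      by (simp add: distrib_left distrib_right add_ac mult.commute)
    also have "\<dots> = 0"
      unfolding that double by simp
    finally have "x + y = y + y" using double[of y] by simp
    then show ?thesis by simp
  qed
  then have "inj (\<lambda>x::'a. x * x)" by (rule injI)
  then have "surj (\<lambda>x::'a. x * x)" by (simp add: finite_UNIV_inj_surj)
  then have "y \<in> range (\<lambda>x::'a. x * x)" by simp
  then obtain x where "y = x * x" by (rule rangeE)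
  then show ?thesis using assms(2) by (intro exI[of _ x]) auto
qed

lemma finite_carrier_mat: "finite (carrier_mat m k :: 'a::finite mat set)"
proof -
  let ?idx = "{..<m} \<times> {..<k}"
  have "carrier_mat m k \<subseteq> (\<lambda>f. mat m k f) ` (?idx \<rightarrow>\<^sub>E (UNIV :: 'a set))"
  proof
    fix A :: "'a mat" assume "A \<in> carrier_mat m k"
    then have "A = mat m k (restrict (\<lambda>ij. A $$ ij) ?idx)" by auto
    moreover have "restrict (\<lambda>ij. A $$ ij) ?idx \<in> ?idx \<rightarrow>\<^sub>E (UNIV :: 'a set)" by simp
    ultimately show "A \<in> (\<lambda>f. mat m k f) ` (?idx \<rightarrow>\<^sub>E UNIV)" by (rule rev_image_eqI[rotated])
  qed
  moreover have "finite ((\<lambda>f. mat m k f) ` (?idx \<rightarrow>\<^sub>E (UNIV :: 'a set)))"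
    by (intro finite_imageI finite_PiE) auto
  ultimately show ?thesis by (rule finite_subset)
qed

lemma finite_weyl_orbit:
  assumes "G \<subseteq> carrier_mat N N"
  shows "finite (weyl_orbit G T (\<beta> :: 'a::{field,finite} mat \<Rightarrow> complex))"
proof -
  have "weyl_orbit G T \<beta> \<subseteq> (\<lambda>(g,h). restrict (\<lambda>t. \<beta> (h * t * g)) T) ` (G \<times> G)"
  proof
    fix f assume "f \<in> weyl_orbit G T \<beta>"
    then obtain g h where "f = restrict (\<lambda>t. \<beta> (h * t * g)) T" "g \<in> G" "h \<in> G"
      unfolding weyl_orbit_def normalizer_mat_def by blast
    then show "f \<in> (\<lambda>(g,h). restrict (\<lambda>t. \<beta> (h * t * g)) T) ` (G \<times> G)"
      by (auto intro: rev_image_eqI[of "(g, h)"])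
  qed
  moreover have "finite ((\<lambda>(g,h). restrict (\<lambda>t. \<beta> (h * t * g)) T) ` (G \<times> G))"
    using finite_subset[OF assms finite_carrier_mat] by simp
  ultimately show ?thesis by (rule finite_subset)
qed

definition involution_on :: "nat \<Rightarrow> (nat \<Rightarrow> nat) \<Rightarrow> bool" where
  "involution_on N p \<longleftrightarrow> (\<forall>l<N. p l < N \<and> p (p l) = l)"

definition perm_mat :: "nat \<Rightarrow> (nat \<Rightarrow> nat) \<Rightarrow> 'a::field mat" where
  "perm_mat N p = mat N N (\<lambda>(a, b). if a = p b then 1 else 0)"

lemma perm_mat_carrier [simp]: "perm_mat N p \<in> carrier_mat N N"
  and dim_row_perm_mat [simp]: "dim_row (perm_mat N p) = N"
  and dim_col_perm_mat [simp]: "dim_col (perm_mat N p) = N"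
  by (auto simp: perm_mat_def)

lemma involution_onD:
  assumes "involution_on N p" "l < N"
  shows "p l < N" "p (p l) = l"
  using assms unfolding involution_on_def by auto

lemma index_perm_mat:
  "a < N \<Longrightarrow> b < N \<Longrightarrow> perm_mat N p $$ (a, b) = (if a = p b then 1 else 0)"
  by (simp add: perm_mat_def)

lemma index_perm_mat_sym:
  assumes "involution_on N p" "a < N" "b < N"
  shows "perm_mat N p $$ (a, b) = (if b = p a then 1 else 0)"
proof -
  have "(a = p b) = (b = p a)" using assms involution_onD[OF assms(1)] by metis
  then show ?thesis using assms by (simp add: index_perm_mat)
qed

lemma sum_delta_involution:
  assumes "involution_on N p" "a < N"
  shows "(\<Sum>k = 0..<N. if k = p a then f k else 0) = f (p a)"
  using involution_onD[OF assms] by (simp only: sum.delta finite_atLeastLessThan) simp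

lemma perm_mat_mult_index:
  assumes p: "involution_on N p" and A: "A \<in> carrier_mat N M" and "a < N" "c < M"
  shows "(perm_mat N p * A) $$ (a, c) = A $$ (p a, c)"
proof -
  have "(perm_mat N p * A) $$ (a, c) = (\<Sum>k = 0..<N. perm_mat N p $$ (a, k) * A $$ (k, c))"
    using assms by (simp add: scalar_prod_def)
  also have "\<dots> = (\<Sum>k = 0..<N. if k = p a then A $$ (k, c) else 0)"
    using assms by (intro sum.cong) (simp_all add: index_perm_mat_sym)
  also have "\<dots> = A $$ (p a, c)"
    using p \<open>a < N\<close> by (rule sum_delta_involution)
  finally show ?thesis .
qed

lemma mult_perm_mat_index:
  assumes "involution_on N p" "A \<in> carrier_mat M N" "a < M" "c < N"
  shows "(A * perm_mat N p) $$ (a, c) = A $$ (a, p c)"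
proof -
  have "(A * perm_mat N p) $$ (a, c) = (\<Sum>k = 0..<N. A $$ (a, k) * perm_mat N p $$ (k, c))"
    using assms by (simp add: scalar_prod_def)
  also have "\<dots> = (\<Sum>k = 0..<N. if k = p c then A $$ (a, k) else 0)"
    using assms by (intro sum.cong) (simp_all add: index_perm_mat)
  also have "\<dots> = A $$ (a, p c)"
    using assms(1,4) by (rule sum_delta_involution)
  finally show ?thesis .
qed

lemma perm_mat_mult_vec_index:
  assumes p: "involution_on N p" and "x \<in> carrier_vec N" "a < N"
  shows "(perm_mat N p *\<^sub>v x) $ a = x $ p a"
proof -
  have "(perm_mat N p *\<^sub>v x) $ a = (\<Sum>k = 0..<N. perm_mat N p $$ (a, k) * x $ k)"
    using assms by (simp add: scalar_prod_def)
  also have "\<dots> = (\<Sum>k = 0..<N. if k = p a then x $ k else 0)"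
    using assms by (intro sum.cong) (simp_all add: index_perm_mat_sym)
  also have "\<dots> = x $ p a"
    using p \<open>a < N\<close> by (rule sum_delta_involution)
  finally show ?thesis .
qed

lemma perm_mat_conj_index:
  assumes p: "involution_on N p" and "A \<in> carrier_mat N N" "a < N" "b < N"
  shows "(perm_mat N p * A * perm_mat N p) $$ (a, b) = A $$ (p a, p b)"
proof -
  have "perm_mat N p * A \<in> carrier_mat N N"
    using assms(2) by (rule mult_carrier_mat[OF perm_mat_carrier])
  then have "(perm_mat N p * A * perm_mat N p) $$ (a, b) = (perm_mat N p * A) $$ (a, p b)"
    using assms by (intro mult_perm_mat_index[OF p])
  also have "\<dots> = A $$ (p a, p b)"
    using assms involution_onD[OF p \<open>b < N\<close>] by (intro perm_mat_mult_index[OF p])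
  finally show ?thesis .
qed

lemma perm_mat_square:
  assumes p: "involution_on N p"
  shows "perm_mat N p * perm_mat N p = (1\<^sub>m N :: 'a::field mat)"
proof (rule eq_matI)
  fix a b assume "a < dim_row (1\<^sub>m N :: 'a mat)" "b < dim_col (1\<^sub>m N :: 'a mat)"
  then have ab: "a < N" "b < N" by auto
  then have "(perm_mat N p * perm_mat N p) $$ (a, b) = (perm_mat N p :: 'a mat) $$ (p a, b)"
    by (intro perm_mat_mult_index[OF p]) auto
  also have "\<dots> = (1\<^sub>m N :: 'a mat) $$ (a, b)"
    using ab involution_onD[OF p] by (simp add: index_perm_mat) metis
  finally show "(perm_mat N p * perm_mat N p) $$ (a, b) = (1\<^sub>m N :: 'a mat) $$ (a, b)" .
qed auto

lemma transpose_perm_mat: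
  assumes "involution_on N p"
  shows "transpose_mat (perm_mat N p) = (perm_mat N p :: 'a::field mat)"
proof (rule eq_matI)
  fix a b assume "a < dim_row (perm_mat N p :: 'a mat)" "b < dim_col (perm_mat N p :: 'a mat)"
  then show "transpose_mat (perm_mat N p) $$ (a, b) = (perm_mat N p :: 'a mat) $$ (a, b)"
    using assms by (simp add: index_perm_mat index_perm_mat_sym) (metis involution_onD(2))
qed auto

lemma perm_mat_invertible:
  assumes "involution_on N p"
  shows "invertible_mat (perm_mat N p :: 'a::field mat)"
  using perm_mat_square[OF assms] unfolding invertible_mat_def inverts_mat_def by auto

definition partner :: "nat \<Rightarrow> nat \<Rightarrow> nat" where
  "partner n l = (if l < n then l + n else l - n)"

text \<open>Indices \<open>l\<close> and \<open>partner n l = l \<plusminus> n\<close> label a hyperbolic pair \<open>e\<^sub>l, f\<^sub>l\<close>.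
  A signed involution permutes the basis compatibly with this pairing; its permutation matrix
  is a Weyl group element of type \<open>C\<^sub>n\<close>, which in characteristic 2 needs no signs.\<close>
definition signed_involution :: "nat \<Rightarrow> (nat \<Rightarrow> nat) \<Rightarrow> bool" where
  "signed_involution n p \<longleftrightarrow>
     involution_on (2 * n) p \<and> (\<forall>l < 2 * n. p (partner n l) = partner n (p l))"

lemma partner_less: "l < 2 * n \<Longrightarrow> partner n l < 2 * n"
  and partner_partner: "l < 2 * n \<Longrightarrow> partner n (partner n l) = l"
  unfolding partner_def by auto

lemma mod_eq_iff_partner:
  assumes "l < 2 * n" "m < 2 * n"
  shows "l mod n = m mod n \<longleftrightarrow> m = l \<or> m = partner n l"
  using assms unfolding partner_def
  by (cases "l < n"; cases "m < n") (auto simp: le_mod_geq)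

lemma signed_involutionD:
  assumes "signed_involution n p" "l < 2 * n"
  shows "p l < 2 * n" "p (p l) = l" "p (partner n l) = partner n (p l)"
  using assms unfolding signed_involution_def involution_on_def by auto

lemma signed_involution_involution_on: "signed_involution n p \<Longrightarrow> involution_on (2 * n) p"
  unfolding signed_involution_def by simp

lemma signed_involution_eq_iff:
  assumes "signed_involution n p" "l < 2 * n" "m < 2 * n"
  shows "p l = m \<longleftrightarrow> l = p m"
  using signed_involutionD[OF assms(1)] assms(2,3) by metis

lemma signed_involution_inj:
  assumes "signed_involution n p" "l < 2 * n" "m < 2 * n"
  shows "p l = p m \<longleftrightarrow> l = m"
  using signed_involutionD[OF assms(1)] assms(2,3) by metis

lemma index_sp_form_char_two:
  assumes "(1::'a::field) + 1 = 0" "a < 2 * n" "b < 2 * n"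
  shows "(sp_form n :: 'a mat) $$ (a, b) = (if b = partner n a then 1 else 0)"
proof -
  have "(- 1 :: 'a) = 1" using assms(1) by (simp add: eq_neg_iff_add_eq_0)
  then show ?thesis using assms(2,3) unfolding sp_form_def partner_def by auto
qed

lemma perm_mat_in_Sp:
  assumes char_two: "(1::'a::field) + 1 = 0" and p: "signed_involution n p"
  shows "(perm_mat (2 * n) p :: 'a mat) \<in> Sp n"
proof -
  have inv: "involution_on (2 * n) p" using p by (rule signed_involution_involution_on)
  have J: "(sp_form n :: 'a mat) \<in> carrier_mat (2 * n) (2 * n)" by (simp add: sp_form_def)
  have "perm_mat (2 * n) p * sp_form n * perm_mat (2 * n) p = (sp_form n :: 'a mat)"
  proof (rule eq_matI)
    fix a b assume "a < dim_row (sp_form n :: 'a mat)" "b < dim_col (sp_form n :: 'a mat)"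
    then have ab: "a < 2 * n" "b < 2 * n" using J by auto
    have "p b = partner n (p a) \<longleftrightarrow> b = partner n a"
      using signed_involutionD(3)[OF p ab(1)] signed_involution_inj[OF p] partner_less ab by metis
    then show "(perm_mat (2 * n) p * sp_form n * perm_mat (2 * n) p) $$ (a, b)
        = (sp_form n :: 'a mat) $$ (a, b)"
      using perm_mat_conj_index[OF inv J ab] index_sp_form_char_two[OF char_two] signed_involutionD(1)[OF p] ab
      by simp
  qed (use J in auto)
  moreover have "transpose_mat (perm_mat (2 * n) p) = (perm_mat (2 * n) p :: 'a mat)"
    by (rule transpose_perm_mat[OF inv])
  ultimately show ?thesis by (simp add: Sp_def)
qed

lemma signed_involution_bij_mod:
  assumes p: "signed_involution n p"
  shows "bij_betw (\<lambda>l. p l mod n) {..<n} {..<n}"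
proof -
  have "inj_on (\<lambda>l. p l mod n) {..<n}"
  proof
    fix l m assume lm: "l \<in> {..<n}" "m \<in> {..<n}" "p l mod n = p m mod n"
    then have "p m = p l \<or> p m = p (partner n l)"
      using mod_eq_iff_partner[of "p l" n "p m"] signed_involutionD[OF p] by simp
    then have "m = l \<or> m = partner n l"
      using lm signed_involution_inj[OF p] partner_less by auto
    then show "l = m" using lm unfolding partner_def by auto
  qed
  moreover have "(\<lambda>l. p l mod n) ` {..<n} \<subseteq> {..<n}"
    by (auto intro: mod_less_divisor)
  ultimately show ?thesis
    by (simp add: bij_betw_def endo_inj_surj)
qed

lemma quad_plus_perm_mat:
  assumes p: "signed_involution n p" and x: "x \<in> carrier_vec (2 * n)"
  shows "quad_plus n (perm_mat (2 * n) p *\<^sub>v x) = quad_plus n (x :: 'a::field vec)"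
proof -
  have inv: "involution_on (2 * n) p" using p by (rule signed_involution_involution_on)
  define g where "g l = x $ l * x $ partner n l" for l
  have g_mod: "g (l mod n) = g l" if "l < 2 * n" for l
  proof (cases "l < n")
    case False
    then have "l mod n = partner n l" using that by (simp add: partner_def le_mod_geq)
    then show ?thesis using that unfolding g_def by (simp add: partner_partner mult.commute)
  qed simp
  have summand: "(perm_mat (2 * n) p *\<^sub>v x) $ i * (perm_mat (2 * n) p *\<^sub>v x) $ (n + i) = g (p i mod n)"
    if "i < n" for i
  proof -
    have "n + i = partner n i" using that by (simp add: partner_def)
    then have "(perm_mat (2 * n) p *\<^sub>v x) $ (n + i) = x $ partner n (p i)"
      using that perm_mat_mult_vec_index[OF inv x] partner_less signed_involutionD(3)[OF p] by simp
    moreover have "(perm_mat (2 * n) p *\<^sub>v x) $ i = x $ p i"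
      using that perm_mat_mult_vec_index[OF inv x] by simp
    ultimately show ?thesis
      using g_mod signed_involutionD(1)[OF p] that unfolding g_def by simp
  qed
  have "quad_plus n (perm_mat (2 * n) p *\<^sub>v x) = (\<Sum>i<n. g (p i mod n))"
    unfolding quad_plus_def using summand by simp
  also have "\<dots> = (\<Sum>i<n. g i)"
    by (rule sum.reindex_bij_betw[OF signed_involution_bij_mod[OF p]])
  also have "\<dots> = quad_plus n x"
    unfolding quad_plus_def g_def partner_def by (simp add: add.commute)
  finally show ?thesis .
qed

lemma perm_mat_in_O_plus:
  assumes "signed_involution n p"
  shows "(perm_mat (2 * n) p :: 'a::field mat) \<in> O_plus n"
  unfolding O_plus_def
  by (simp add: quad_plus_perm_mat[OF assms] perm_mat_invertible[OF signed_involution_involution_on[OF assms]])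

text \<open>A vector fixed by the permutation is determined by its entries at the indices
  \<open>l \<le> p l\<close>, one from each orbit, and these may be chosen freely.\<close>
lemma card_fixed_vectors_perm_mat:
  assumes p: "involution_on N p"
  shows "card {x \<in> carrier_vec N. (perm_mat N p :: 'a::{field,finite} mat) *\<^sub>v x = x}
    = CARD('a) ^ card {l. l < N \<and> l \<le> p l}"
proof -
  define R where "R = {l. l < N \<and> l \<le> p l}"
  define F where "F = {x \<in> carrier_vec N. (perm_mat N p :: 'a mat) *\<^sub>v x = x}"
  define rep where "rep l = min l (p l)" for l
  have rep: "rep l \<in> R" "rep (p l) = rep l" if "l < N" for l
    using involution_onD[OF p that] unfolding R_def rep_def by auto
  have F_iff: "x \<in> F \<longleftrightarrow> x \<in> carrier_vec N \<and> (\<forall>l<N. x $ p l = x $ l)" for x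
  proof -
    have "perm_mat N p *\<^sub>v x = x \<longleftrightarrow> (\<forall>l<N. x $ p l = x $ l)" if "x \<in> carrier_vec N"
      using that perm_mat_mult_vec_index[OF p that] by (auto simp: vec_eq_iff)
    then show ?thesis unfolding F_def by blast
  qed
  have F_rep: "x $ rep l = x $ l" if "x \<in> F" "l < N" for x l
    using that F_iff unfolding rep_def min_def by auto
  have "bij_betw (\<lambda>x. restrict (\<lambda>l. x $ l) R) F (R \<rightarrow>\<^sub>E (UNIV :: 'a set))"
  proof (rule bij_betw_byWitness[where f' = "\<lambda>f. vec N (\<lambda>l. f (rep l))"])
    show "\<forall>x\<in>F. vec N (\<lambda>l. restrict (\<lambda>l. x $ l) R (rep l)) = x"
      using F_rep rep(1) F_iff by (auto simp: vec_eq_iff)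
    show "\<forall>f\<in>R \<rightarrow>\<^sub>E (UNIV :: 'a set). restrict (\<lambda>l. vec N (\<lambda>l. f (rep l)) $ l) R = f"
    proof
      fix f :: "nat \<Rightarrow> 'a" assume f: "f \<in> R \<rightarrow>\<^sub>E UNIV"
      show "restrict (\<lambda>l. vec N (\<lambda>l. f (rep l)) $ l) R = f"
      proof
        fix l
        show "restrict (\<lambda>l. vec N (\<lambda>l. f (rep l)) $ l) R l = f l"
        proof (cases "l \<in> R")
          case True
          then have "l < N" "rep l = l" unfolding R_def rep_def by auto
          then show ?thesis using True by simp
        qed (simp add: PiE_arb[OF f])
      qed
    qed
    show "(\<lambda>x. restrict (\<lambda>l. x $ l) R) ` F \<subseteq> R \<rightarrow>\<^sub>E UNIV" by auto
    show "(\<lambda>f. vec N (\<lambda>l. f (rep l))) ` (R \<rightarrow>\<^sub>E (UNIV :: 'a set)) \<subseteq> F"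
      using involution_onD(1)[OF p] rep(2) by (auto simp: F_iff)
  qed
  then have "card F = card (R \<rightarrow>\<^sub>E (UNIV :: 'a set))" by (rule bij_betw_same_card)
  also have "\<dots> = CARD('a) ^ card R" by (simp add: card_PiE R_def)
  finally show ?thesis unfolding F_def R_def .
qed

lemma perm_mat_in_Omega_plus:
  assumes p: "signed_involution n p" and "even (card {l. l < 2 * n \<and> l \<le> p l})"
  shows "(perm_mat (2 * n) p :: 'a::{field,finite} mat) \<in> Omega_plus n"
  unfolding Omega_plus_def
  using assms(2) by (auto simp: perm_mat_in_O_plus[OF p]
      card_fixed_vectors_perm_mat[OF signed_involution_involution_on[OF p]])

definition torus_entry :: "nat \<Rightarrow> (nat \<Rightarrow> 'a::field) \<Rightarrow> nat \<Rightarrow> 'a" where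
  "torus_entry n t l = (if l < n then t l else inverse (t (l - n)))"

definition torus_mat :: "nat \<Rightarrow> (nat \<Rightarrow> 'a::field) \<Rightarrow> 'a mat" where
  "torus_mat n t = mat (2 * n) (2 * n) (\<lambda>(a, b). if a = b then torus_entry n t a else 0)"

lemma split_torus_eq: "split_torus n = {torus_mat n t | t. \<forall>i<n. t i \<noteq> (0::'a::field)}"
  unfolding split_torus_def torus_mat_def torus_entry_def by simp

lemma torus_mat_carrier [simp]: "torus_mat n t \<in> carrier_mat (2 * n) (2 * n)"
  by (simp add: torus_mat_def)

lemma torus_mat_in_split_torus: "(\<And>i. i < n \<Longrightarrow> t i \<noteq> 0) \<Longrightarrow> torus_mat n t \<in> split_torus n"
  unfolding split_torus_eq by blast

lemma index_torus_mat:
  "a < 2 * n \<Longrightarrow> b < 2 * n \<Longrightarrow> torus_mat n t $$ (a, b) = (if a = b then torus_entry n t a else 0)"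
  by (simp add: torus_mat_def)

lemma torus_entry_partner: "l < 2 * n \<Longrightarrow> torus_entry n t (partner n l) = inverse (torus_entry n t l)"
  unfolding torus_entry_def partner_def by auto

lemma torus_mat_cong: "(\<And>l. l < n \<Longrightarrow> t l = s l) \<Longrightarrow> torus_mat n t = torus_mat n s"
  unfolding torus_mat_def torus_entry_def by (intro eq_matI) auto

lemma torus_mat_mult: "torus_mat n t * torus_mat n s = torus_mat n (\<lambda>l. t l * s l :: 'a::field)"
proof (rule eq_matI)
  fix a b assume "a < dim_row (torus_mat n (\<lambda>l. t l * s l))" "b < dim_col (torus_mat n (\<lambda>l. t l * s l))"
  then have ab: "a < 2 * n" "b < 2 * n" by (auto simp: torus_mat_def)
  have "(torus_mat n t * torus_mat n s) $$ (a, b)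
      = (\<Sum>k = 0..<2 * n. torus_mat n t $$ (a, k) * torus_mat n s $$ (k, b))"
    using ab by (simp add: scalar_prod_def torus_mat_def)
  also have "\<dots> = (\<Sum>k = 0..<2 * n. if k = a then torus_entry n t a * torus_mat n s $$ (a, b) else 0)"
    using ab by (intro sum.cong) (simp_all add: index_torus_mat)
  also have "\<dots> = torus_entry n t a * torus_mat n s $$ (a, b)"
    using ab by (simp only: sum.delta finite_atLeastLessThan) simp
  also have "\<dots> = torus_mat n (\<lambda>l. t l * s l) $$ (a, b)"
    using ab by (simp add: index_torus_mat torus_entry_def)
  finally show "(torus_mat n t * torus_mat n s) $$ (a, b) = torus_mat n (\<lambda>l. t l * s l) $$ (a, b)" .
qed (auto simp: torus_mat_def)

definition twist :: "nat \<Rightarrow> (nat \<Rightarrow> nat) \<Rightarrow> (nat \<Rightarrow> 'a::field) \<Rightarrow> nat \<Rightarrow> 'a" where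
  "twist n p t l = torus_entry n t (p l)"

lemma torus_entry_twist:
  assumes p: "signed_involution n p" and "a < 2 * n"
  shows "torus_entry n (twist n p t) a = torus_entry n t (p a)"
proof (cases "a < n")
  case False
  then have a: "a - n < 2 * n" "a = partner n (a - n)" using assms(2) by (auto simp: partner_def)
  have "torus_entry n (twist n p t) a = inverse (torus_entry n t (p (a - n)))"
    using False by (simp add: torus_entry_def twist_def)
  also have "\<dots> = torus_entry n t (p a)"
    using a signed_involutionD[OF p a(1)] torus_entry_partner by metis
  finally show ?thesis .
qed (simp add: torus_entry_def twist_def)

lemma perm_mat_conj_torus_mat:
  assumes p: "signed_involution n p"
  shows "perm_mat (2 * n) p * torus_mat n t * perm_mat (2 * n) p = torus_mat n (twist n p t)"
proof (rule eq_matI)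
  have inv: "involution_on (2 * n) p" using p by (rule signed_involution_involution_on)
  fix a b assume "a < dim_row (torus_mat n (twist n p t))" "b < dim_col (torus_mat n (twist n p t))"
  then have ab: "a < 2 * n" "b < 2 * n" by (auto simp: torus_mat_def)
  have "(perm_mat (2 * n) p * torus_mat n t * perm_mat (2 * n) p) $$ (a, b) = torus_mat n t $$ (p a, p b)"
    by (rule perm_mat_conj_index[OF inv torus_mat_carrier ab])
  also have "\<dots> = torus_mat n (twist n p t) $$ (a, b)"
    using ab signed_involutionD(1)[OF p] signed_involution_inj[OF p]
    by (simp add: index_torus_mat torus_entry_twist[OF p])
  finally show "(perm_mat (2 * n) p * torus_mat n t * perm_mat (2 * n) p) $$ (a, b)
      = torus_mat n (twist n p t) $$ (a, b)" .
qed (auto simp: torus_mat_def)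

lemma perm_mat_conj_conj:
  assumes p: "involution_on N p" and A: "A \<in> carrier_mat N N"
  shows "perm_mat N p * (perm_mat N p * A * perm_mat N p) * perm_mat N p = A"
proof -
  have PAP: "perm_mat N p * A * perm_mat N p \<in> carrier_mat N N"
    using A by (metis mult_carrier_mat perm_mat_carrier)
  show ?thesis
  proof (rule eq_matI)
    fix a b assume "a < dim_row A" "b < dim_col A"
    then have ab: "a < N" "b < N" using A by auto
    then show "(perm_mat N p * (perm_mat N p * A * perm_mat N p) * perm_mat N p) $$ (a, b) = A $$ (a, b)"
      using perm_mat_conj_index[OF p PAP ab] perm_mat_conj_index[OF p A] involution_onD[OF p]
      by simp
  qed (use A in auto)
qed

lemma perm_mat_in_normalizer:
  assumes p: "signed_involution n p" and PG: "perm_mat (2 * n) p \<in> G"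
  shows "perm_mat (2 * n) p \<in> normalizer_mat G (split_torus (n :: nat) :: 'a::field mat set)"
proof -
  let ?P = "perm_mat (2 * n) p :: 'a mat"
  let ?c = "\<lambda>t. ?P * t * ?P"
  have inv: "involution_on (2 * n) p" using p by (rule signed_involution_involution_on)
  have maps: "?c t \<in> split_torus n" if t: "t \<in> split_torus n" for t :: "'a mat"
  proof -
    obtain s where s: "t = torus_mat n s" "\<forall>i<n. s i \<noteq> (0::'a)"
      using t unfolding split_torus_eq by blast
    have "twist n p s i \<noteq> 0" if "i < n" for i
      using s(2) signed_involutionD(1)[OF p, of i] that by (auto simp: twist_def torus_entry_def)
    then show ?thesis
      using s(1) perm_mat_conj_torus_mat[OF p] torus_mat_in_split_torus by metis
  qed
  have "?c ` split_torus n = split_torus n"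
  proof
    show "?c ` split_torus n \<subseteq> split_torus n" using maps by blast
    show "split_torus n \<subseteq> ?c ` split_torus n"
    proof
      fix t :: "'a mat" assume t: "t \<in> split_torus n"
      then have "t \<in> carrier_mat (2 * n) (2 * n)" unfolding split_torus_eq by auto
      then have "?c (?c t) = t" by (rule perm_mat_conj_conj[OF inv])
      then show "t \<in> ?c ` split_torus n" using maps[OF t] by (metis image_eqI)
    qed
  qed
  then show ?thesis unfolding normalizer_mat_def using PG perm_mat_square[OF inv] by auto
qed

lemma perm_mat_conj_in_weyl_orbit:
  assumes "signed_involution n p" "perm_mat (2 * n) p \<in> G"
  shows "restrict (\<lambda>t. \<beta> (perm_mat (2 * n) p * t * perm_mat (2 * n) p)) (split_torus n)
    \<in> weyl_orbit G (split_torus n) (\<beta> :: 'a::field mat \<Rightarrow> complex)"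
  unfolding weyl_orbit_def
  using perm_mat_in_normalizer[OF assms] assms(2)
    perm_mat_square[OF signed_involution_involution_on[OF assms(1)]]
  by fastforce

text \<open>Conjugation by \<open>flip n S\<close> inverts the torus coordinates in \<open>S\<close>; conjugation by
  \<open>swap_perm n neg i j\<close> exchanges the coordinates \<open>i\<close> and \<open>j\<close> and, if \<open>neg\<close>, inverts both.\<close>
definition flip :: "nat \<Rightarrow> nat set \<Rightarrow> nat \<Rightarrow> nat" where
  "flip n S l = (if (if l < n then l else l - n) \<in> S then partner n l else l)"

definition swap_perm :: "nat \<Rightarrow> bool \<Rightarrow> nat \<Rightarrow> nat \<Rightarrow> nat \<Rightarrow> nat" where
  "swap_perm n neg i j l =
    (if l < n then
       (if l = i then (if neg then j + n else j) else if l = j then (if neg then i + n else i) else l)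
     else
       (if l - n = i then (if neg then j else j + n) else if l - n = j then (if neg then i else i + n) else l))"

lemma signed_involution_flip: "signed_involution n (flip n S)"
  unfolding signed_involution_def involution_on_def flip_def partner_def by auto

lemma signed_involution_swap_perm: "i < n \<Longrightarrow> j < n \<Longrightarrow> signed_involution n (swap_perm n neg i j)"
  unfolding signed_involution_def involution_on_def swap_perm_def partner_def by auto

lemma card_le_self_eq_diff:
  "card {l. l < N \<and> l \<le> p l} = N - card {l. l < N \<and> p l < l}"
proof -
  have "{l. l < N \<and> l \<le> p l} = {..<N} - {l. l < N \<and> p l < l}" by auto
  then show ?thesis by (simp add: card_Diff_subset subset_eq)
qed

lemma card_le_flip:
  assumes "S \<subseteq> {..<n}"
  shows "card {l. l < 2 * n \<and> l \<le> flip n S l} = 2 * n - card S"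
proof -
  have "{l. l < 2 * n \<and> flip n S l < l} = (\<lambda>l. l + n) ` S"
    using assms by (force simp: flip_def partner_def)
  moreover have "card ((\<lambda>l. l + n) ` S) = card S" by (simp add: card_image)
  ultimately show ?thesis by (simp add: card_le_self_eq_diff)
qed

lemma card_le_swap_perm:
  assumes "i < n" "j < n" "i \<noteq> j"
  shows "card {l. l < 2 * n \<and> l \<le> swap_perm n neg i j l} = 2 * n - 2"
proof -
  have "{l. l < 2 * n \<and> swap_perm n neg i j l < l}
      = (if neg then {i + n, j + n} else {max i j, max i j + n})"
    using assms by (force simp: swap_perm_def max_def)
  moreover have "card {i + n, j + n} = 2" "card {max i j, max i j + n} = 2" using assms by auto
  ultimately show ?thesis by (simp add: card_le_self_eq_diff)
qed

lemma perm_mat_flip_in_group: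
  assumes char_two: "(1::'a::{field,finite}) + 1 = 0" and G: "G = Sp n \<or> G = Omega_plus n"
    and S: "S \<subseteq> {..<n}" and even: "G \<noteq> Sp n \<Longrightarrow> even (card S)"
  shows "(perm_mat (2 * n) (flip n S) :: 'a mat) \<in> G"
proof (cases "G = Sp n")
  case True
  then show ?thesis using perm_mat_in_Sp[OF char_two signed_involution_flip] by simp
next
  case False
  have "card S \<le> 2 * n" using card_mono[OF _ S] by simp
  then have "even (card {l. l < 2 * n \<and> l \<le> flip n S l})"
    using False G even card_le_flip[OF S] by auto
  then show ?thesis using False G perm_mat_in_Omega_plus[OF signed_involution_flip] by auto
qed

lemma perm_mat_swap_in_group:
  assumes char_two: "(1::'a::{field,finite}) + 1 = 0" and G: "G = Sp n \<or> G = Omega_plus n"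
    and "i < n" "j < n" "i \<noteq> j"
  shows "(perm_mat (2 * n) (swap_perm n neg i j) :: 'a mat) \<in> G"
proof -
  have p: "signed_involution n (swap_perm n neg i j)"
    using assms(3,4) by (rule signed_involution_swap_perm)
  show ?thesis
  proof (cases "G = Sp n")
    case True
    then show ?thesis using perm_mat_in_Sp[OF char_two p] by simp
  next
    case False
    then show ?thesis using G perm_mat_in_Omega_plus[OF p] card_le_swap_perm[OF assms(3-5)] by simp
  qed
qed

definition toggle :: "nat \<Rightarrow> nat set \<Rightarrow> nat set" where
  "toggle i A = (if i \<in> A then A - {i} else insert i A)"

lemma mem_toggle: "x \<in> toggle i A \<longleftrightarrow> (x \<in> A) \<noteq> (x = i)"
  unfolding toggle_def by auto

lemma toggle_inj: "toggle i A = toggle i' A \<Longrightarrow> i = i'"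
  by (metis mem_toggle)

lemma toggle_subset: "i < n \<Longrightarrow> A \<subseteq> {..<n} \<Longrightarrow> toggle i A \<subseteq> {..<n}"
  unfolding toggle_def by auto

lemma toggle_singleton: "toggle i {j} = (if i = j then {} else {i, j})"
  unfolding toggle_def by auto

lemma even_card_toggle:
  assumes "finite A" "odd (card A)"
  shows "even (card (toggle i A))"
  using assms by (cases "i \<in> A") (auto simp: toggle_def card_Diff_singleton odd_pos)

lemma toggle_zero_ne_toggle_123: "toggle i {0} \<noteq> toggle i' {1, 2, 3}"
proof
  assume eq: "toggle i {0} = toggle i' {1, 2, 3}"
  have "x = i" if x: "x \<in> {1, 2, 3}" "x \<noteq> i'" for x :: nat
  proof -
    have "x \<in> toggle i {0}" unfolding eq using x by (simp add: mem_toggle)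
    then show ?thesis using x(1) by (auto simp: mem_toggle)
  qed
  from this[of 1] this[of 2] this[of 3] show False by (cases "i' = 1"; cases "i' = 2") auto
qed

definition coord_torus :: "nat \<Rightarrow> nat \<Rightarrow> 'a::field \<Rightarrow> 'a mat" where
  "coord_torus n i x = torus_mat n (\<lambda>l. if l = i then x else 1)"

lemma coord_torus_in_split_torus: "x \<noteq> 0 \<Longrightarrow> coord_torus n i x \<in> split_torus n"
  unfolding coord_torus_def by (rule torus_mat_in_split_torus) simp

lemma coord_torus_mult: "coord_torus n i x * coord_torus n i y = coord_torus n i (x * y)"
  unfolding coord_torus_def torus_mat_mult by (rule torus_mat_cong) simp

lemma torus_entry_coord:
  assumes "i < n" "m < 2 * n"
  shows "torus_entry n (\<lambda>l. if l = i then x else 1) m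
    = (if m = i then x else if m = partner n i then inverse x else 1)"
  using assms unfolding torus_entry_def partner_def by auto

lemma perm_mat_conj_coord_torus:
  assumes p: "signed_involution n p" and i: "i < n"
  shows "perm_mat (2 * n) p * coord_torus n i x * perm_mat (2 * n) p
    = (if p i < n then coord_torus n (p i) x else coord_torus n (p i - n) (inverse x))"
proof -
  have entry: "torus_entry n (\<lambda>l. if l = i then x else 1) (p l)
      = (if p i < n then (if l = p i then x else 1) else (if l = p i - n then inverse x else 1))"
    if l: "l < n" for l
  proof -
    have l2: "l < 2 * n" and i2: "i < 2 * n" and partner_i: "partner n i < 2 * n"
      using l i by (auto simp: partner_def)
    have A: "p l = i \<longleftrightarrow> l = p i"
      by (rule signed_involution_eq_iff[OF p l2 i2])
    have B: "p l = partner n i \<longleftrightarrow> l = partner n (p i)"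
      using signed_involution_eq_iff[OF p l2 partner_i] signed_involutionD(3)[OF p i2] by simp
    have "torus_entry n (\<lambda>l. if l = i then x else 1) (p l)
        = (if l = p i then x else if l = partner n (p i) then inverse x else 1)"
      unfolding torus_entry_coord[OF i signed_involutionD(1)[OF p l2]] A B ..
    also have "\<dots> = (if p i < n then (if l = p i then x else 1) else (if l = p i - n then inverse x else 1))"
      using l by (auto simp: partner_def)
    finally show ?thesis .
  qed
  show ?thesis
    unfolding coord_torus_def perm_mat_conj_torus_mat[OF p] twist_def
    by (auto intro: torus_mat_cong simp: entry)
qed

locale torus_char =
  fixes n :: nat and \<beta> :: "'a::{field,finite} mat \<Rightarrow> complex"
  assumes linear: "linear_char (split_torus n) \<beta>"
    and char_two: "(1::'a) + 1 = 0"
begin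

definition coord_char :: "nat \<Rightarrow> 'a \<Rightarrow> complex" where
  "coord_char i x = \<beta> (coord_torus n i x)"

definition char_support :: "nat set" where
  "char_support = {i. i < n \<and> (\<exists>x. x \<noteq> 0 \<and> coord_char i x \<noteq> 1)}"

definition conj_char :: "(nat \<Rightarrow> nat) \<Rightarrow> 'a mat \<Rightarrow> complex" where
  "conj_char p = restrict (\<lambda>t. \<beta> (perm_mat (2 * n) p * t * perm_mat (2 * n) p)) (split_torus n)"

lemma beta_mult: "s \<in> split_torus n \<Longrightarrow> t \<in> split_torus n \<Longrightarrow> \<beta> (s * t) = \<beta> s * \<beta> t"
  using linear unfolding linear_char_def by blast

lemma beta_one: "\<beta> (torus_mat n (\<lambda>_. 1)) = 1"
proof -
  have T: "torus_mat n (\<lambda>_. 1 :: 'a) \<in> split_torus n" by (rule torus_mat_in_split_torus) simp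
  have "\<beta> (torus_mat n (\<lambda>_. 1)) = \<beta> (torus_mat n (\<lambda>_. 1)) * \<beta> (torus_mat n (\<lambda>_. 1))"
    using beta_mult[OF T T] torus_mat_mult[of n "\<lambda>_. 1 :: 'a" "\<lambda>_. 1"] by simp
  moreover have "\<beta> (torus_mat n (\<lambda>_. 1)) \<noteq> 0" using linear T unfolding linear_char_def by blast
  ultimately show ?thesis by simp
qed

lemma coord_char_mult:
  "x \<noteq> 0 \<Longrightarrow> y \<noteq> 0 \<Longrightarrow> coord_char i (x * y) = coord_char i x * coord_char i y"
  unfolding coord_char_def
  by (metis beta_mult coord_torus_in_split_torus coord_torus_mult)

lemma coord_char_one: "coord_char i 1 = 1"
proof -
  have "coord_torus n i 1 = torus_mat n (\<lambda>_. 1 :: 'a)"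
    unfolding coord_torus_def by (rule torus_mat_cong) simp
  then show ?thesis unfolding coord_char_def by (simp add: beta_one)
qed

lemma coord_char_inverse: "x \<noteq> 0 \<Longrightarrow> coord_char i x * coord_char i (inverse x) = 1"
  using coord_char_mult[of x "inverse x" i] by (simp add: coord_char_one)

lemma coord_char_outside_support:
  "l < n \<Longrightarrow> l \<notin> char_support \<Longrightarrow> x \<noteq> 0 \<Longrightarrow> coord_char l x = 1"
  unfolding char_support_def by auto

lemma char_support_subset: "char_support \<subseteq> {..<n}"
  unfolding char_support_def by auto

text \<open>Every element of the split torus is a product of coordinate elements.\<close>
lemma char_support_nonempty:
  assumes "\<exists>t \<in> split_torus n. \<beta> t \<noteq> 1"
  shows "char_support \<noteq> {}"
proof
  assume empty: "char_support = {}"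
  obtain s where s: "\<forall>i<n. s i \<noteq> (0::'a)" "\<beta> (torus_mat n s) \<noteq> 1"
    using assms unfolding split_torus_eq by blast
  define partial where "partial m = torus_mat n (\<lambda>l. if l < m then s l else 1)" for m
  have partial_in: "partial m \<in> split_torus n" for m
    unfolding partial_def by (rule torus_mat_in_split_torus) (use s(1) in auto)
  have partial_one: "\<beta> (partial m) = 1" if "m \<le> n" for m
    using that
  proof (induction m)
    case 0
    have "partial 0 = torus_mat n (\<lambda>_. 1)" unfolding partial_def by simp
    then show ?case by (simp add: beta_one)
  next
    case (Suc m)
    have "partial (Suc m) = partial m * coord_torus n m (s m)"
      unfolding partial_def coord_torus_def torus_mat_mult by (rule torus_mat_cong) auto
    moreover have "coord_char m (s m) = 1"
      using Suc.prems s(1) empty coord_char_outside_support by simp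
    ultimately show ?case
      using Suc beta_mult[OF partial_in coord_torus_in_split_torus] s(1)
      unfolding coord_char_def by simp
  qed
  have "partial n = torus_mat n s" unfolding partial_def by (rule torus_mat_cong) simp
  then show False using partial_one[of n] s(2) by simp
qed

text \<open>In characteristic 2 every element is a square, so \<open>\<chi>(x) = \<chi>(x\<inverse>)\<close> for all \<open>x\<close>
  would force \<open>\<chi>(x\<^sup>2) = 1\<close>, i.e. \<open>\<chi> = 1\<close>.\<close>
lemma coord_char_ne_inverse:
  assumes "i \<in> char_support"
  shows "\<exists>x. x \<noteq> 0 \<and> coord_char i x \<noteq> coord_char i (inverse x)"
proof (rule ccontr)
  assume "\<not> ?thesis"
  then have sym: "coord_char i x = coord_char i (inverse x)" if "x \<noteq> 0" for x
    using that by blast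
  have "coord_char i y = 1" if y: "y \<noteq> 0" for y
  proof -
    obtain x where x: "x \<noteq> 0" "x * x = y" using square_surj_char_two[OF char_two y] by blast
    have "coord_char i y = coord_char i x * coord_char i x"
      using coord_char_mult[OF x(1) x(1)] x(2) by simp
    also have "\<dots> = 1"
      using sym[OF x(1)] coord_char_inverse[OF x(1)] by metis
    finally show ?thesis .
  qed
  then show False using assms unfolding char_support_def by blast
qed

lemma conj_char_coord_torus:
  assumes p: "signed_involution n p" and "i < n" "x \<noteq> 0"
  shows "conj_char p (coord_torus n i x)
    = (if p i < n then coord_char (p i) x else coord_char (p i - n) (inverse x))"
  using assms coord_torus_in_split_torus[OF assms(3)]
  unfolding conj_char_def coord_char_def by (simp add: perm_mat_conj_coord_torus[OF p])

lemma conj_char_flip: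
  assumes "l < n" "x \<noteq> 0"
  shows "conj_char (flip n S) (coord_torus n l x) = coord_char l (if l \<in> S then inverse x else x)"
  using conj_char_coord_torus[OF signed_involution_flip assms] assms(1)
  by (simp add: flip_def partner_def)

lemma conj_char_swap_perm:
  assumes "i < n" "j < n" "l < n" "x \<noteq> 0"
  shows "conj_char (swap_perm n neg i j) (coord_torus n l x)
    = (if l = i then coord_char j (if neg then inverse x else x)
       else if l = j then coord_char i (if neg then inverse x else x) else coord_char l x)"
  using conj_char_coord_torus[OF signed_involution_swap_perm[OF assms(1,2)] assms(3,4)] assms(1-3)
  by (simp add: swap_perm_def)

lemma conj_char_flip_neq:
  assumes "S \<inter> char_support \<noteq> S' \<inter> char_support"
  shows "conj_char (flip n S) \<noteq> conj_char (flip n S')"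
proof -
  obtain l where l: "l \<in> char_support" "l \<in> S \<longleftrightarrow> l \<notin> S'" using assms by blast
  then have "l < n" using char_support_subset by blast
  obtain x where x: "x \<noteq> 0" "coord_char l x \<noteq> coord_char l (inverse x)"
    using coord_char_ne_inverse[OF l(1)] by blast
  have "conj_char (flip n S) (coord_torus n l x) \<noteq> conj_char (flip n S') (coord_torus n l x)"
    using l(2) x by (auto simp: conj_char_flip[OF \<open>l < n\<close> x(1)])
  then show ?thesis by metis
qed

lemma conj_char_flip_neq_swap:
  assumes j: "j \<in> char_support" and i: "i < n" "i \<notin> char_support"
  shows "conj_char (flip n S) \<noteq> conj_char (swap_perm n neg i j)"
proof -
  have "j < n" "j \<noteq> i" using j i char_support_subset by auto
  obtain x where x: "x \<noteq> 0" "coord_char j x \<noteq> 1"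
    using j unfolding char_support_def by blast
  define y where "y = (if j \<in> S then inverse x else x)"
  have y: "y \<noteq> 0" "(if j \<in> S then inverse y else y) = x" using x(1) unfolding y_def by auto
  have "conj_char (flip n S) (coord_torus n j y) = coord_char j x"
    using conj_char_flip[OF \<open>j < n\<close> y(1)] y(2) by simp
  moreover have "conj_char (swap_perm n neg i j) (coord_torus n j y) = 1"
    using conj_char_swap_perm[OF i(1) \<open>j < n\<close> \<open>j < n\<close> y(1)] \<open>j \<noteq> i\<close> y(1)
      coord_char_outside_support[OF i] by simp
  ultimately show ?thesis using x(2) by metis
qed

lemma conj_char_swap_inj:
  assumes j: "j \<in> char_support"
    and i: "i < n" "i \<notin> char_support" and i': "i' < n" "i' \<notin> char_support"
    and eq: "conj_char (swap_perm n neg i j) = conj_char (swap_perm n neg' i' j)"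
  shows "i = i' \<and> neg = neg'"
proof -
  have "j < n" "j \<noteq> i" "j \<noteq> i'" using j i i' char_support_subset by auto
  let ?val = "\<lambda>neg i y. conj_char (swap_perm n neg i j) (coord_torus n i y)"
  have val: "?val neg i y = coord_char j (if neg then inverse y else y)" if "y \<noteq> 0" for y
    using conj_char_swap_perm[OF i(1) \<open>j < n\<close> i(1) that] by simp
  show ?thesis
  proof (cases "i = i'")
    case True
    obtain x where x: "x \<noteq> 0" "coord_char j x \<noteq> coord_char j (inverse x)"
      using coord_char_ne_inverse[OF j] by blast
    have "coord_char j (if neg then inverse x else x) = coord_char j (if neg' then inverse x else x)"
      using val[OF x(1)] eq True conj_char_swap_perm[OF i(1) \<open>j < n\<close> i(1) x(1)] by simp
    then show ?thesis using True x(2) by (cases neg; cases neg') auto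
  next
    case False
    obtain x where x: "x \<noteq> 0" "coord_char j x \<noteq> 1"
      using j unfolding char_support_def by blast
    define y where "y = (if neg then inverse x else x)"
    have y: "y \<noteq> 0" "(if neg then inverse y else y) = x" using x(1) unfolding y_def by auto
    have "conj_char (swap_perm n neg' i' j) (coord_torus n i y) = 1"
      using conj_char_swap_perm[OF i'(1) \<open>j < n\<close> i(1) y(1)] False \<open>j \<noteq> i\<close>
        coord_char_outside_support[OF i y(1)] by simp
    then show ?thesis using val[OF y(1)] y(2) x(2) eq by simp
  qed
qed

lemma card_weyl_orbit_ge:
  fixes G :: "'a mat set" and I :: "'i set" and S :: "'i \<Rightarrow> nat set"
  assumes fin: "finite (weyl_orbit G (split_torus n) \<beta>)"
    and j: "j \<in> char_support"
    and flips: "\<And>a. a \<in> I \<Longrightarrow> perm_mat (2 * n) (flip n (S a)) \<in> G"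
    and separated: "inj_on (\<lambda>a. S a \<inter> char_support) I"
    and swaps: "\<And>i neg. i < n \<Longrightarrow> i \<notin> char_support \<Longrightarrow> perm_mat (2 * n) (swap_perm n neg i j) \<in> G"
  shows "card I + 2 * (n - card char_support) \<le> card (weyl_orbit G (split_torus n) \<beta>)"
proof -
  let ?orbit = "weyl_orbit G (split_torus n) \<beta>"
  let ?J = "({..<n} - char_support) \<times> (UNIV :: bool set)"
  define A where "A = (\<lambda>a. conj_char (flip n (S a))) ` I"
  define B where "B = (\<lambda>(i, neg). conj_char (swap_perm n neg i j)) ` ?J"
  have "inj_on (\<lambda>a. conj_char (flip n (S a))) I"
  proof (rule inj_onI)
    fix a b assume ab: "a \<in> I" "b \<in> I" "conj_char (flip n (S a)) = conj_char (flip n (S b))"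
    then have "S a \<inter> char_support = S b \<inter> char_support" using conj_char_flip_neq by blast
    then show "a = b" using inj_onD[OF separated _ ab(1,2)] by blast
  qed
  then have card_A: "card A = card I" unfolding A_def by (rule card_image)
  have "inj_on (\<lambda>(i, neg). conj_char (swap_perm n neg i j)) ?J"
    using conj_char_swap_inj[OF j] by (auto simp: inj_on_def)
  then have "card B = card ?J" unfolding B_def by (rule card_image)
  also have "\<dots> = 2 * (n - card char_support)"
    using char_support_subset by (simp add: card_cartesian_product card_Diff_subset finite_subset)
  finally have card_B: "card B = 2 * (n - card char_support)" .
  have disjoint: "A \<inter> B = {}"
    unfolding A_def B_def using conj_char_flip_neq_swap[OF j] by auto
  have sub: "A \<union> B \<subseteq> ?orbit"
    unfolding A_def B_def conj_char_def
    using perm_mat_conj_in_weyl_orbit[OF signed_involution_flip flips]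
      perm_mat_conj_in_weyl_orbit[OF signed_involution_swap_perm swaps] char_support_subset j
    by auto
  have "finite A" "finite B" using finite_subset[OF sub fin] by auto
  then have "card (A \<union> B) = card I + 2 * (n - card char_support)"
    using card_A card_B disjoint by (simp add: card_Un_disjoint)
  then show ?thesis using card_mono[OF fin sub] by simp
qed

lemma card_weyl_orbit_ge_inert:
  fixes G :: "'a mat set"
  assumes G: "G = Sp n \<or> G = Omega_plus n" and fin: "finite (weyl_orbit G (split_torus n) \<beta>)"
    and j: "j \<in> char_support"
    and X: "X \<subseteq> {..<n}" "X \<inter> char_support = {}" and card_X: "G \<noteq> Sp n \<Longrightarrow> card X = 1"
  shows "2 * n \<le> card (weyl_orbit G (split_torus n) \<beta>)"
proof -
  define S where "S = (\<lambda>(i, e). if e then toggle i {j} else insert i X)"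
  let ?I = "char_support \<times> (UNIV :: bool set)"
  have jn: "j < n" using j char_support_subset by blast
  have S_support: "S (i, e) \<inter> char_support = (if e then toggle i {j} else {i})"
    if "i \<in> char_support" for i e
    using that j X(2) unfolding S_def toggle_def by auto
  have "perm_mat (2 * n) (flip n (S a)) \<in> G" if "a \<in> ?I" for a
  proof -
    obtain i e where a: "a = (i, e)" "i \<in> char_support" using \<open>a \<in> ?I\<close> by blast
    then have "i < n" "i \<notin> X" using X(2) char_support_subset by auto
    have "S a \<subseteq> {..<n}" using a \<open>i < n\<close> jn X(1) unfolding S_def toggle_def by auto
    moreover have "even (card (S a))" if "G \<noteq> Sp n"
      using a \<open>i \<notin> X\<close> card_X[OF that] finite_subset[OF X(1)]
      by (auto simp: S_def toggle_singleton)
    ultimately show ?thesis by (rule perm_mat_flip_in_group[OF char_two G])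
  qed
  moreover have "inj_on (\<lambda>a. S a \<inter> char_support) ?I"
  proof (rule inj_onI, clarify)
    fix i e i' e' assume "i \<in> char_support" "i' \<in> char_support"
      and "S (i, e) \<inter> char_support = S (i', e') \<inter> char_support"
    then have eq: "(if e then toggle i {j} else {i}) = (if e' then toggle i' {j} else {i'})"
      by (simp add: S_support)
    have "toggle k {j} \<noteq> {k'}" "{k'} \<noteq> toggle k {j}" for k k'
      by (auto simp: toggle_singleton)
    then show "i = i' \<and> e = e'"
      using eq by (cases e; cases e') (auto dest: toggle_inj)
  qed
  moreover have "perm_mat (2 * n) (swap_perm n neg i j) \<in> G" if "i < n" "i \<notin> char_support" for i neg
    using that j by (intro perm_mat_swap_in_group[OF char_two G _ jn]) auto
  ultimately have "card ?I + 2 * (n - card char_support) \<le> card (weyl_orbit G (split_torus n) \<beta>)"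
    by (rule card_weyl_orbit_ge[OF fin j])
  moreover have "card char_support \<le> n"
    using card_mono[OF _ char_support_subset] by simp
  ultimately show ?thesis by (simp add: card_cartesian_product)
qed

lemma card_weyl_orbit_ge_full_support:
  fixes G :: "'a mat set"
  assumes G: "G = Sp n \<or> G = Omega_plus n" and fin: "finite (weyl_orbit G (split_torus n) \<beta>)"
    and "3 < n" and full: "char_support = {..<n}"
  shows "2 * n \<le> card (weyl_orbit G (split_torus n) \<beta>)"
proof -
  \<comment> \<open>\<open>2 * n\<close> distinct sets of even size, as required in \<open>\<Omega>\<^sup>+\<close>; here \<open>3 < n\<close> is used.\<close>
  define S where "S = (\<lambda>(i, e). toggle i (if e then {1, 2, 3} else {0}))"
  let ?I = "{..<n} \<times> (UNIV :: bool set)"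
  have S_sub: "S (i, e) \<subseteq> {..<n}" if "i < n" for i e
    unfolding S_def using that \<open>3 < n\<close> by (simp add: toggle_subset)
  have "perm_mat (2 * n) (flip n (S a)) \<in> G" if a: "a \<in> ?I" for a
  proof -
    obtain i e where a: "a = (i, e)" "i < n" using a by blast
    have "even (card (S a))" using a(1) by (auto simp: S_def intro!: even_card_toggle)
    then show ?thesis using S_sub[OF a(2)] a(1) by (intro perm_mat_flip_in_group[OF char_two G]) auto
  qed
  moreover have "inj_on (\<lambda>a. S a \<inter> char_support) ?I"
  proof (rule inj_onI, clarify)
    fix i e i' e' assume "i < n" "i' < n" "S (i, e) \<inter> char_support = S (i', e') \<inter> char_support"
    then have "S (i, e) = S (i', e')" using S_sub full by (simp add: Int_absorb2)
    then show "i = i' \<and> e = e'"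
      using toggle_zero_ne_toggle_123[of i i'] toggle_zero_ne_toggle_123[of i' i]
      by (cases e; cases e') (auto simp: S_def dest: toggle_inj)
  qed
  moreover have "perm_mat (2 * n) (swap_perm n neg i 0) \<in> G" if "i < n" "i \<notin> char_support" for i neg
    using that full by simp
  moreover have "0 \<in> char_support" using \<open>3 < n\<close> full by simp
  ultimately have "card ?I + 2 * (n - card char_support) \<le> card (weyl_orbit G (split_torus n) \<beta>)"
    using card_weyl_orbit_ge[OF fin] by blast
  then show ?thesis by (simp add: card_cartesian_product)
qed

end

theorem proposition4p13:
  fixes q n :: nat and G :: "'a :: {field, finite} mat set" and \<beta> :: "'a mat \<Rightarrow> complex"
  assumes "card (UNIV :: 'a set) = q" and "even q"
    and "(G = Sp n \<and> n > 1) \<or> (G = Omega_plus n \<and> n > 3)"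
    and "linear_char (split_torus n) \<beta>"
    and "\<exists>t \<in> split_torus n. \<beta> t \<noteq> 1"
  shows "card (weyl_orbit G (split_torus n) \<beta>) \<ge> 2 * n"
proof -
  have char_two: "(1::'a) + 1 = 0" using assms(1,2) by (intro char_two_if_card_even) simp
  interpret torus_char n \<beta> using assms(4) char_two by unfold_locales
  obtain j where j: "j \<in> char_support" using char_support_nonempty[OF assms(5)] by blast
  have G: "G = Sp n \<or> G = Omega_plus n" using assms(3) by blast
  then have "G \<subseteq> carrier_mat (2 * n) (2 * n)" unfolding Sp_def Omega_plus_def O_plus_def by auto
  then have fin: "finite (weyl_orbit G (split_torus n) \<beta>)" by (rule finite_weyl_orbit)
  consider "G = Sp n" | m where "G = Omega_plus n" "m < n" "m \<notin> char_support"
    | "G = Omega_plus n" "3 < n" "char_support = {..<n}"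
    using assms(3) char_support_subset by blast
  then show ?thesis
  proof cases
    case 1
    then show ?thesis using card_weyl_orbit_ge_inert[OF G fin j, of "{}"] by simp
  next
    case (2 m)
    then show ?thesis using card_weyl_orbit_ge_inert[OF G fin j, of "{m}"] by simp
  next
    case 3
    then show ?thesis using card_weyl_orbit_ge_full_support[OF G fin] by simp
  qed
qed

end
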